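(* Every affine equivariant integrator map is affine functionally equivariant; that is, if $\phi$ is affine equivariant, then for all Banach spaces $Y,Z$, every affine map $F\colon Y\to Z$, and every $f\in\mathfrak{X}(Y)$, with $g\in\mathfrak{X}(Y\times Z)$ given by $g(y,z)=\bigl(f(y),F'(y)f(y)\bigr)$, we have $\phi(f)\sim_{(\mathrm{id},F)}\phi(g)$.
   Context: All spaces are real Banach spaces; $\mathfrak{X}(Y)$ denotes the set of smooth vector fields on $Y$. An integrator map $\phi$ is a collection of smooth maps $\phi_Y\colon\mathfrak{X}(Y)\to\mathfrak{X}(Y)$, one for each Banach space $Y$; write $\phi(f)=\phi_Y(f)$. For a Gâteaux differentiable $\chi\colon Y\to U$, $f\in\mathfrak{X}(Y)$ and $g\in\mathfrak{X}(U)$ are $\chi$-related, $f\sim_\chi g$, if $\chi'(y)f(y)=g(\chi(y))$ for all $y$. $\phi$ is affine equivariant if for every affine map $A\colon Y\to U$ between Banach spaces, $f\sim_A g$ implies $\phi(f)\sim_A\phi(g)$. The map $(\mathrm{id},F)\colon Y\to Y\times Z$ is $y\mapsto(y,F(y))$. *)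

theory Defs
  imports "HOL-Analysis.Analysis"
begin

definition vderiv :: "(real \<Rightarrow> 'b::real_normed_vector) \<Rightarrow> real \<Rightarrow> 'b" where
  "vderiv c = (\<lambda>t. vector_derivative c (at t))"

definition smooth_curve :: "(real \<Rightarrow> 'b::real_normed_vector) \<Rightarrow> bool" where
  "smooth_curve c \<longleftrightarrow> (\<forall>n t. ((vderiv ^^ n) c) differentiable (at t))"

text \<open>Smooth maps between Banach spaces (convenient calculus: smooth curves are
  mapped to smooth curves; on Banach spaces this coincides with Frechet C-infinity).\<close>
definition smooth_map :: "('a::banach \<Rightarrow> 'b::banach) \<Rightarrow> bool" where
  "smooth_map F \<longleftrightarrow> (\<forall>c. smooth_curve c \<longrightarrow> smooth_curve (F \<circ> c))"

abbreviation vector_field :: "('a::banach \<Rightarrow> 'a) \<Rightarrow> bool" where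
  "vector_field f \<equiv> smooth_map f"

definition gderiv :: "('a::real_normed_vector \<Rightarrow> 'b::real_normed_vector) \<Rightarrow> 'a \<Rightarrow> 'a \<Rightarrow> 'b" where
  "gderiv \<kappa> y v = vector_derivative (\<lambda>t::real. \<kappa> (y + t *\<^sub>R v)) (at 0)"

definition gateaux_differentiable :: "('a::real_normed_vector \<Rightarrow> 'b::real_normed_vector) \<Rightarrow> bool" where
  "gateaux_differentiable \<kappa> \<longleftrightarrow>
     (\<forall>y v. (\<lambda>t::real. \<kappa> (y + t *\<^sub>R v)) differentiable (at 0)) \<and>
     (\<forall>y. bounded_linear (gderiv \<kappa> y))"

definition related :: "('a::real_normed_vector \<Rightarrow> 'b::real_normed_vector) \<Rightarrow> ('a \<Rightarrow> 'a) \<Rightarrow> ('b \<Rightarrow> 'b) \<Rightarrow> bool" where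
  "related \<kappa> f g \<longleftrightarrow> gateaux_differentiable \<kappa> \<and> (\<forall>y. gderiv \<kappa> y (f y) = g (\<kappa> y))"

definition affine_map :: "('a::real_normed_vector \<Rightarrow> 'b::real_normed_vector) \<Rightarrow> bool" where
  "affine_map A \<longleftrightarrow> (\<exists>L c. bounded_linear L \<and> (\<forall>x. A x = L x + c))"

definition integrator_component :: "(('a::banach \<Rightarrow> 'a) \<Rightarrow> ('a \<Rightarrow> 'a)) \<Rightarrow> bool" where
  "integrator_component \<phi> \<longleftrightarrow> (\<forall>f. vector_field f \<longrightarrow> vector_field (\<phi> f))"

text \<open>Affine equivariance of phi for the pair of spaces (Y,U), with components phi1 = phi_Y, phi2 = phi_U.\<close>
definition affine_equivariant_pair ::
  "(('a::banach \<Rightarrow> 'a) \<Rightarrow> ('a \<Rightarrow> 'a)) \<Rightarrow> (('b::banach \<Rightarrow> 'b) \<Rightarrow> ('b \<Rightarrow> 'b)) \<Rightarrow> bool" where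
  "affine_equivariant_pair \<phi>1 \<phi>2 \<longleftrightarrow>
     (\<forall>A f g. affine_map A \<longrightarrow> vector_field f \<longrightarrow> vector_field g \<longrightarrow>
        related A f g \<longrightarrow> related A (\<phi>1 f) (\<phi>2 g))"

end

theory Submission
  imports Defs
begin

text \<open>If \<open>F\<close> is affine, so is its graph map \<open>(id, F)\<close>, and the lifted field \<open>g\<close> is exactly
  the push-forward of \<open>f\<close> along it, i.e. \<open>f\<close> and \<open>g\<close> are \<open>(id, F)\<close>-related. A single
  instance of affine equivariance, for the pair of spaces \<open>Y\<close> and \<open>Y \<times> Z\<close>, then yields
  the claim.\<close>

lemma affine_mapE:
  assumes "affine_map F"
  obtains L c where "bounded_linear L" and "F = (\<lambda>x. L x + c)"
  using assms unfolding affine_map_def by blast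

lemma gderiv_affine:
  assumes "bounded_linear L"
  shows "gderiv (\<lambda>x. L x + c) y = L"
proof
  fix v
  have "((\<lambda>t::real. y + t *\<^sub>R v) has_vector_derivative v) (at 0)"
    by (auto intro!: derivative_eq_intros)
  from bounded_linear.has_vector_derivative[OF assms this]
  have "((\<lambda>t::real. L (y + t *\<^sub>R v) + c) has_vector_derivative L v) (at 0)"
    by (auto intro!: derivative_eq_intros)
  then show "gderiv (\<lambda>x. L x + c) y v = L v"
    unfolding gderiv_def by (rule vector_derivative_at)
qed

lemma gateaux_differentiable_affine:
  assumes "bounded_linear L"
  shows "gateaux_differentiable (\<lambda>x. L x + c)"
  unfolding gateaux_differentiable_def gderiv_affine[OF assms]
proof (intro conjI allI)
  fix y v
  have "(\<lambda>t::real. L (y + t *\<^sub>R v) + c) = (\<lambda>t. (L y + c) + t *\<^sub>R L v)"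
    using assms by (simp add: linear_simps algebra_simps)
  then show "(\<lambda>t::real. L (y + t *\<^sub>R v) + c) differentiable (at 0)"
    by (simp add: differentiable_add differentiable_scaleR)
qed (rule assms)

lemma related_affine_iff:
  assumes "bounded_linear L"
  shows "related (\<lambda>x. L x + c) f g \<longleftrightarrow> (\<forall>y. L (f y) = g (L y + c))"
  unfolding related_def gderiv_affine[OF assms]
  using gateaux_differentiable_affine[OF assms] by simp

lemma graph_affine_eq:
  fixes L :: "'a::monoid_add \<Rightarrow> 'b::plus"
  shows "(\<lambda>y. (y, L y + c)) = (\<lambda>y. (y, L y) + (0, c))"
  by simp

lemma bounded_linear_graph: "bounded_linear L \<Longrightarrow> bounded_linear (\<lambda>y. (y, L y))"
  by (intro bounded_linear_Pair bounded_linear_ident)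

lemma related_affine_graph:
  assumes "affine_map F"
  shows "related (\<lambda>y. (y, F y)) f (\<lambda>(y, z). (f y, gderiv F y (f y)))"
proof -
  obtain L c where L: "bounded_linear L" and F: "F = (\<lambda>x. L x + c)"
    using assms by (rule affine_mapE)
  show ?thesis
    unfolding F graph_affine_eq related_affine_iff[OF bounded_linear_graph[OF L]]
    by (simp add: gderiv_affine[OF L])
qed

lemma affine_map_graph:
  assumes "affine_map F"
  shows "affine_map (\<lambda>y. (y, F y))"
proof -
  obtain L c where L: "bounded_linear L" and F: "F = (\<lambda>x. L x + c)"
    using assms by (rule affine_mapE)
  show ?thesis
    unfolding affine_map_def F graph_affine_eq
    using bounded_linear_graph[OF L] by blast
qed

lemma vderiv_funpow_bounded_linear:
  assumes L: "bounded_linear L" and a: "smooth_curve a"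
  shows "(vderiv ^^ n) (\<lambda>t. L (a t)) = (\<lambda>t. L ((vderiv ^^ n) a t))"
proof (induction n)
  case 0
  then show ?case by simp
next
  case (Suc n)
  have "vderiv (\<lambda>t. L ((vderiv ^^ n) a t)) t = L (vderiv ((vderiv ^^ n) a) t)" for t
  proof -
    have "((vderiv ^^ n) a has_vector_derivative vderiv ((vderiv ^^ n) a) t) (at t)"
      using a unfolding smooth_curve_def vderiv_def by (blast intro: vector_derivative_works[THEN iffD1])
    from bounded_linear.has_vector_derivative[OF L this]
    show ?thesis
      unfolding vderiv_def[of "\<lambda>t. L ((vderiv ^^ n) a t)"] by (rule vector_derivative_at)
  qed
  then show ?case
    using Suc by auto
qed

lemma smooth_curve_bounded_linear:
  assumes L: "bounded_linear L" and a: "smooth_curve a"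
  shows "smooth_curve (\<lambda>t. L (a t))"
  unfolding smooth_curve_def vderiv_funpow_bounded_linear[OF L a]
  using a bounded_linear.has_derivative[OF L]
  unfolding smooth_curve_def differentiable_def by blast

lemma smooth_map_bounded_linear:
  "bounded_linear L \<Longrightarrow> smooth_map L"
  unfolding smooth_map_def o_def by (blast intro: smooth_curve_bounded_linear)

lemma smooth_map_comp:
  "smooth_map F \<Longrightarrow> smooth_map G \<Longrightarrow> smooth_map (F \<circ> G)"
  unfolding smooth_map_def by (simp add: comp_assoc)

lemma vector_field_affine_lift:
  assumes "affine_map F" and "vector_field f"
  shows "vector_field (\<lambda>(y, z). (f y, gderiv F y (f y)))"
proof -
  obtain L c where L: "bounded_linear L" and F: "F = (\<lambda>x. L x + c)"
    using assms(1) by (rule affine_mapE)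
  have lift: "(\<lambda>(y, z). (f y, gderiv F y (f y))) = (\<lambda>y. (y, L y)) \<circ> f \<circ> fst"
    unfolding F gderiv_affine[OF L] by auto
  show ?thesis
    unfolding lift
    by (intro smooth_map_comp assms(2) smooth_map_bounded_linear bounded_linear_graph[OF L]
        bounded_linear_fst)
qed

theorem proposition2p6:
  fixes \<phi>Y :: "('y::banach \<Rightarrow> 'y) \<Rightarrow> ('y \<Rightarrow> 'y)"
    and \<phi>Z :: "('z::banach \<Rightarrow> 'z) \<Rightarrow> ('z \<Rightarrow> 'z)"
    and \<phi>P :: "('y \<times> 'z \<Rightarrow> 'y \<times> 'z) \<Rightarrow> ('y \<times> 'z \<Rightarrow> 'y \<times> 'z)"
    and F :: "'y \<Rightarrow> 'z"
    and f :: "'y \<Rightarrow> 'y"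
  assumes intY: "integrator_component \<phi>Y"
    and intZ: "integrator_component \<phi>Z"
    and intP: "integrator_component \<phi>P"
    and eqYY: "affine_equivariant_pair \<phi>Y \<phi>Y"
    and eqYZ: "affine_equivariant_pair \<phi>Y \<phi>Z"
    and eqYP: "affine_equivariant_pair \<phi>Y \<phi>P"
    and eqZY: "affine_equivariant_pair \<phi>Z \<phi>Y"
    and eqZZ: "affine_equivariant_pair \<phi>Z \<phi>Z"
    and eqZP: "affine_equivariant_pair \<phi>Z \<phi>P"
    and eqPY: "affine_equivariant_pair \<phi>P \<phi>Y"
    and eqPZ: "affine_equivariant_pair \<phi>P \<phi>Z"
    and eqPP: "affine_equivariant_pair \<phi>P \<phi>P"
    and F_affine: "affine_map F"
    and f_field: "vector_field f"
  shows "related (\<lambda>y. (y, F y)) (\<phi>Y f) (\<phi>P (\<lambda>(y, z). (f y, gderiv F y (f y))))"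
  using eqYP affine_map_graph[OF F_affine] f_field
    vector_field_affine_lift[OF F_affine f_field] related_affine_graph[OF F_affine]
  unfolding affine_equivariant_pair_def by blast

end
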